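(* Let $G=(V,E)$ be a graph with $n=|V|$ vertices, let $k>0$ be an integer such that $G$ has at least one vertex cover of size at most $k$, and let $\mu$ be the population size, with $k\mu=o(\sqrt{n})$. Consider either the $(1_\mu+1_\mu)$ EA$_D$ or the $(\mu+\lambda)$ EA$_D$ with $\lambda\ge\mu$ (both described in the context), maximizing the total Hamming distance over populations of $\mu$ feasible individuals, where an individual is feasible iff it is a vertex cover of $G$ of size at most $k$, and where every offspring is produced by applying the jump-and-repair mutation operator to a parent from the current population. Then in each iteration, the probability that the algorithm obtains a population of feasible individuals with optimal diversity is at least $2^{-k\mu}(1-o(1))$ (with $o(1)$ as $n\to\infty$), and therefore the number of iterations until such a population is found is stochastically dominated by the geometric distribution $\mathrm{Geom}(2^{-k\mu}(1-o(1)))$.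
   Context: A vertex cover of $G=(V,E)$ is a set $C\subseteq V$ such that every edge has at least one endpoint in $C$. Subsets of $V$ are identified with bit strings of length $n$. For a population (multiset) $P=(x_1,\dots,x_\mu)$ the diversity is the total Hamming distance $D(P)=\sum_{1\le a<b\le\mu}H(x_a,x_b)$; a population of feasible individuals has optimal diversity if its $D$ value is the maximum over all populations of $\mu$ feasible individuals. Jump-and-repair mutation (input: parent cover $x$ with $|x|\le k$): Step 1: form $S\subseteq x$ by including each $v\in x$ independently with probability $1/2$ and set $y\gets x\setminus S$; Step 2: add to $y$ every vertex $u$ adjacent to some $v\in S$; Step 3: while $|y|<k$, add to $y$ a vertex chosen uniformly at random from $V\setminus y$. Output $y$. $(1_\mu+1_\mu)$ EA$_D$: starts from a population $P$ of $\mu$ feasible individuals; in each iteration it creates a population $P'$ of $\mu$ offspring, each independently generated by applying the mutation to a parent from $P$, and replaces $P$ by $P'$ if all individuals of $P'$ are feasible and $D(P')\ge D(P)$. $(\mu+\lambda)$ EA$_D$: starts from a population $P$ of $\mu$ feasible individuals; in each iteration it creates $\lambda$ offspring, each independently generated by applying the mutation to a parent from $P$, adds them to $P$, and then removes $\lambda$ individuals: using the modified fitness $g$ under which all feasible individuals are equally good and infeasible ones are worse, it first removes individuals of minimum $g$-value as long as the population size stays at least $\mu$, and if more individuals must still be removed among tied individuals of worst $g$-value, it removes a set of them whose removal leaves a population of maximum diversity $D$. (In particular, if at least $\mu$ feasible individuals are present, the new population is a size-$\mu$ sub-multiset of feasible individuals maximizing $D$ among such choices.) *)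

theory Defs
  imports "HOL-Probability.Probability" "HOL-Library.Landau_Symbols"
begin

definition graph :: "nat \<Rightarrow> nat set set \<Rightarrow> bool" where
  "graph n E \<longleftrightarrow> (\<forall>e\<in>E. \<exists>u v. e = {u, v} \<and> u \<noteq> v \<and> u < n \<and> v < n)"

definition vertex_cover :: "nat \<Rightarrow> nat set set \<Rightarrow> nat set \<Rightarrow> bool" where
  "vertex_cover n E C \<longleftrightarrow> C \<subseteq> {..<n} \<and> (\<forall>e\<in>E. e \<inter> C \<noteq> {})"

definition feasible :: "nat \<Rightarrow> nat set set \<Rightarrow> nat \<Rightarrow> nat set \<Rightarrow> bool" where
  "feasible n E k x \<longleftrightarrow> vertex_cover n E x \<and> card x \<le> k"

text \<open>Hamming distance of the bit strings identified with the subsets x, y of V.\<close>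
definition hamming :: "nat set \<Rightarrow> nat set \<Rightarrow> nat" where
  "hamming x y = card ((x - y) \<union> (y - x))"

text \<open>Populations are lists (order irrelevant); D sums over all pairs a < b.\<close>
definition diversity :: "nat set list \<Rightarrow> nat" where
  "diversity P = (\<Sum>b<length P. \<Sum>a<b. hamming (P ! a) (P ! b))"

definition feasible_pop :: "nat \<Rightarrow> nat set set \<Rightarrow> nat \<Rightarrow> nat set list \<Rightarrow> bool" where
  "feasible_pop n E k P \<longleftrightarrow> (\<forall>x\<in>set P. feasible n E k x)"

definition optimal_diversity :: "nat \<Rightarrow> nat set set \<Rightarrow> nat \<Rightarrow> nat set list \<Rightarrow> bool" where
  "optimal_diversity n E k P \<longleftrightarrow> feasible_pop n E k P \<and>
     (\<forall>Q. length Q = length P \<and> feasible_pop n E k Q \<longrightarrow> diversity Q \<le> diversity P)"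

definition fill_step :: "nat \<Rightarrow> nat \<Rightarrow> nat set \<Rightarrow> nat set pmf" where
  "fill_step n k y = (if card y < k \<and> {..<n} - y \<noteq> {}
      then map_pmf (\<lambda>u. insert u y) (pmf_of_set ({..<n} - y))
      else return_pmf y)"

text \<open>Step 3: the loop runs at most k times (each pass increases |y| by one),
  so k guarded passes implement it exactly.\<close>
definition fill :: "nat \<Rightarrow> nat \<Rightarrow> nat set \<Rightarrow> nat set pmf" where
  "fill n k y = ((\<lambda>p. bind_pmf p (fill_step n k)) ^^ k) (return_pmf y)"

definition jump_repair :: "nat \<Rightarrow> nat set set \<Rightarrow> nat \<Rightarrow> nat set \<Rightarrow> nat set pmf" where
  "jump_repair n E k x = do {
     f \<leftarrow> Pi_pmf x False (\<lambda>_. bernoulli_pmf (1/2));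
     let S = {v \<in> x. f v};
     let y = (x - S) \<union> {u. \<exists>v\<in>S. {u, v} \<in> E};
     fill n k y }"

primrec indep_list :: "'a pmf list \<Rightarrow> 'a list pmf" where
  "indep_list [] = return_pmf []"
| "indep_list (p # ps) = do { x \<leftarrow> p; xs \<leftarrow> indep_list ps; return_pmf (x # xs) }"

definition step_one :: "nat \<Rightarrow> nat set set \<Rightarrow> nat \<Rightarrow> nat set list \<Rightarrow> nat set list pmf" where
  "step_one n E k P = do {
     P' \<leftarrow> indep_list (map (jump_repair n E k) P);
     return_pmf (if feasible_pop n E k P' \<and> diversity P' \<ge> diversity P then P' else P) }"

definition select_candidates :: "nat \<Rightarrow> nat set set \<Rightarrow> nat \<Rightarrow> nat \<Rightarrow> nat set list \<Rightarrow> nat set list set" where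
  "select_candidates n E k \<mu> Pool =
     {Q. mset Q \<subseteq># mset Pool \<and> length Q = \<mu> \<and> feasible_pop n E k Q}"

definition select :: "nat \<Rightarrow> nat set set \<Rightarrow> nat \<Rightarrow> nat \<Rightarrow> nat set list \<Rightarrow> nat set list pmf" where
  "select n E k \<mu> Pool = pmf_of_set
     {Q \<in> select_candidates n E k \<mu> Pool.
        \<forall>Q'\<in>select_candidates n E k \<mu> Pool. diversity Q' \<le> diversity Q}"

definition step_plus :: "nat \<Rightarrow> nat set set \<Rightarrow> nat \<Rightarrow> nat \<Rightarrow> nat set list \<Rightarrow> nat set list pmf" where
  "step_plus n E k lam P = do {
     Off \<leftarrow> indep_list (replicate lam
            (do { i \<leftarrow> pmf_of_set {..<length P}; jump_repair n E k (P ! i) }));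
     select n E k (length P) (P @ Off) }"

definition run :: "('s \<Rightarrow> 's pmf) \<Rightarrow> nat \<Rightarrow> 's \<Rightarrow> 's pmf" where
  "run step t P = ((\<lambda>p. bind_pmf p step) ^^ t) (return_pmf P)"

end

theory Submission
  imports Defs
begin

(* Fix a population z_1, ..., z_mu of optimal diversity. A jump-and-repair mutation of a feasible
   parent x selects S = x - z_i with probability 2^-|x| >= 2^-k; since z_i is a cover, every
   neighbour of a removed vertex lies in z_i, so the repaired set is a vertex cover contained in z_i.
   Step 3 pads it to size k >= |z_i|, and each padding vertex avoids a given set of at most 2 k mu
   forbidden vertices with probability at least 1 - 2 k mu / (n - k). If the i-th offspring w_i
   arises in this way and its padding avoids all z_j and all earlier offspring, then
   w_a \<inter> w_b \<subseteq> z_a \<inter> z_b and |w_a| >= |z_a|, hence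
   H(w_a, w_b) = |w_a| + |w_b| - 2 |w_a \<inter> w_b| >= H(z_a, z_b): the first mu offspring have optimal
   diversity, and both algorithms accept them. By Bernoulli's inequality this happens with probability
   at least 2^-(k mu) (1 - 4 (k mu)^2 / n), where (k mu)^2 / n -> 0 as k mu = o(sqrt n). Once reached,
   optimal diversity is never lost, which gives the geometric bound. *)

lemma measure_bind_pmf_ge:
  assumes "c1 \<le> measure_pmf.prob p A" "0 \<le> c2"
    and "\<And>x. x \<in> set_pmf p \<Longrightarrow> x \<in> A \<Longrightarrow> c2 \<le> measure_pmf.prob (f x) B"
  shows "c1 * c2 \<le> measure_pmf.prob (bind_pmf p f) B"
proof -
  have "ennreal (c2 * measure_pmf.prob p A) = (\<integral>\<^sup>+x. ennreal c2 * indicator A x \<partial>measure_pmf p)"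
    using assms(2) by (simp add: nn_integral_cmult_indicator measure_pmf.emeasure_eq_measure ennreal_mult)
  also have "\<dots> \<le> (\<integral>\<^sup>+x. emeasure (measure_pmf (f x)) B \<partial>measure_pmf p)"
    using assms(3) by (intro nn_integral_mono_AE AE_pmfI)
      (auto simp: measure_pmf.emeasure_eq_measure split: split_indicator)
  also have "\<dots> = emeasure (measure_pmf (bind_pmf p f)) B"
    by simp
  finally have "c2 * measure_pmf.prob p A \<le> measure_pmf.prob (bind_pmf p f) B"
    by (simp add: measure_pmf.emeasure_eq_measure ennreal_le_iff)
  moreover have "c1 * c2 \<le> measure_pmf.prob p A * c2"
    using assms(1,2) by (rule mult_right_mono)
  ultimately show ?thesis by (simp add: mult.commute)
qed

lemma measure_bind_pmf_le:
  assumes "0 \<le> c"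
    and "\<And>x. x \<in> set_pmf p \<Longrightarrow> x \<in> A \<Longrightarrow> measure_pmf.prob (f x) B \<le> c"
    and "\<And>x. x \<in> set_pmf p \<Longrightarrow> x \<notin> A \<Longrightarrow> measure_pmf.prob (f x) B = 0"
  shows "measure_pmf.prob (bind_pmf p f) B \<le> c * measure_pmf.prob p A"
proof -
  have "ennreal (measure_pmf.prob (bind_pmf p f) B) = (\<integral>\<^sup>+x. emeasure (measure_pmf (f x)) B \<partial>measure_pmf p)"
    by (simp add: measure_pmf.emeasure_eq_measure[symmetric])
  also have "\<dots> \<le> (\<integral>\<^sup>+x. ennreal c * indicator A x \<partial>measure_pmf p)"
    using assms(2,3) by (intro nn_integral_mono_AE AE_pmfI)
      (auto simp: measure_pmf.emeasure_eq_measure ennreal_leI split: split_indicator)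
  also have "\<dots> = ennreal (c * measure_pmf.prob p A)"
    using assms(1) by (simp add: nn_integral_cmult_indicator measure_pmf.emeasure_eq_measure ennreal_mult)
  finally show ?thesis
    using assms(1) by (simp add: ennreal_le_iff)
qed

lemma run_Suc: "run step (Suc t) s = bind_pmf (run step t s) step"
  unfolding run_def by simp

lemma prob_run_not_absorbed_le:
  assumes inv: "\<And>s s'. I s \<Longrightarrow> s' \<in> set_pmf (step s) \<Longrightarrow> I s'"
    and absorbing: "\<And>s s'. I s \<Longrightarrow> G s \<Longrightarrow> s' \<in> set_pmf (step s) \<Longrightarrow> G s'"
    and progress: "\<And>s. I s \<Longrightarrow> p \<le> measure_pmf.prob (step s) {s. G s}"
    and "I s0"
  shows "measure_pmf.prob (run step t s0) {s. \<not> G s} \<le> (1 - p) ^ t"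
proof (induction t)
  case 0
  show ?case by (simp add: run_def)
next
  case (Suc t)
  have support: "I s" if "s \<in> set_pmf (run step t s0)" for s t
    using that by (induction t arbitrary: s) (auto simp: run_Suc run_def[of _ 0] \<open>I s0\<close> dest: inv)
  have p_le_1: "p \<le> 1"
    using progress[OF \<open>I s0\<close>] measure_pmf.prob_le_1 order.trans by blast
  have "measure_pmf.prob (run step (Suc t) s0) {s. \<not> G s}
      \<le> (1 - p) * measure_pmf.prob (run step t s0) {s. \<not> G s}"
    unfolding run_Suc
  proof (rule measure_bind_pmf_le)
    fix s assume "s \<in> set_pmf (run step t s0)"
    then show "measure_pmf.prob (step s) {s. \<not> G s} \<le> 1 - p"
      using progress[OF support] measure_pmf.prob_compl[of "{s. G s}" "step s"]
      by (simp add: Compl_eq_Diff_UNIV[symmetric] Collect_neg_eq)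
  next
    fix s assume "s \<in> set_pmf (run step t s0)" "s \<notin> {s. \<not> G s}"
    then show "measure_pmf.prob (step s) {s. \<not> G s} = 0"
      using support absorbing by (auto simp: measure_pmf_zero_iff)
  qed (use p_le_1 in simp)
  also have "\<dots> \<le> (1 - p) * (1 - p) ^ t"
    using Suc p_le_1 by (intro mult_left_mono) auto
  finally show ?case by simp
qed

lemma hamming_eq_card:
  assumes "finite x" "finite y"
  shows "hamming x y = card x + card y - 2 * card (x \<inter> y)"
proof -
  have "hamming x y = card (x - y) + card (y - x)"
    unfolding hamming_def using assms by (subst card_Un_disjoint) auto
  moreover have "card (x - y) = card x - card (x \<inter> y)" "card (y - x) = card y - card (x \<inter> y)"
    using assms by (simp_all add: card_Diff_subset_Int Int_commute)
  moreover have "card (x \<inter> y) \<le> card x" "card (x \<inter> y) \<le> card y"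
    using assms by (simp_all add: card_mono)
  ultimately show ?thesis by simp
qed

lemma hamming_mono:
  assumes "finite z1" "finite z2" "finite w1" "finite w2"
    and "card z1 \<le> card w1" "card z2 \<le> card w2" "w1 \<inter> w2 \<subseteq> z1 \<inter> z2"
  shows "hamming z1 z2 \<le> hamming w1 w2"
proof -
  have "card (w1 \<inter> w2) \<le> card (z1 \<inter> z2)"
    using assms by (intro card_mono) auto
  moreover have "card (z1 \<inter> z2) \<le> card z1" "card (w1 \<inter> w2) \<le> card w2"
    using assms by (simp_all add: card_mono)
  ultimately show ?thesis
    using assms by (simp add: hamming_eq_card)
qed

lemma diversity_mono:
  assumes "length P = length Q"
    and "\<And>a b. a < b \<Longrightarrow> b < length P \<Longrightarrow> hamming (P ! a) (P ! b) \<le> hamming (Q ! a) (Q ! b)"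
  shows "diversity P \<le> diversity Q"
  unfolding diversity_def using assms by (auto intro!: sum_mono)

text \<open>ws begins with R-replacements of the sets in zs, and every element that ws ! i adds to
  zs ! i is fresh: it lies neither in A nor in an earlier ws ! j.\<close>
fun fresh_replacements :: "('a set \<Rightarrow> 'a set \<Rightarrow> bool) \<Rightarrow> 'a set \<Rightarrow> 'a set list \<Rightarrow> 'a set list \<Rightarrow> bool" where
  "fresh_replacements R A [] ws \<longleftrightarrow> True"
| "fresh_replacements R A (z # zs) [] \<longleftrightarrow> False"
| "fresh_replacements R A (z # zs) (w # ws) \<longleftrightarrow>
     R z w \<and> (w - z) \<inter> A = {} \<and> fresh_replacements R (A \<union> w) zs ws"

lemma fresh_replacements_length:
  "fresh_replacements R A zs ws \<Longrightarrow> length zs \<le> length ws"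
  by (induction R A zs ws rule: fresh_replacements.induct) auto

lemma fresh_replacements_nth:
  assumes "fresh_replacements R A zs ws" "i < length zs"
  shows "R (zs ! i) (ws ! i)" "(ws ! i - zs ! i) \<inter> A = {}"
  using assms
  by (induction R A zs ws arbitrary: i rule: fresh_replacements.induct; fastforce simp: nth_Cons split: nat.splits)+

lemma fresh_replacements_Int_subset:
  assumes "fresh_replacements R A zs ws" "\<Union>(set zs) \<subseteq> A" "a < b" "b < length zs"
  shows "ws ! a \<inter> ws ! b \<subseteq> zs ! a \<inter> zs ! b"
  using assms
proof (induction R A zs ws arbitrary: a b rule: fresh_replacements.induct)
  case (3 R A z zs w ws)
  then obtain b' where b: "b = Suc b'" "b' < length zs"
    by (cases b) auto
  show ?case
  proof (cases a)
    case 0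
    have "(ws ! b' - zs ! b') \<inter> (A \<union> w) = {}"
      using fresh_replacements_nth(2)[of R "A \<union> w" zs ws b'] "3.prems"(1) b by simp
    moreover have "zs ! b' \<subseteq> A"
      using "3.prems"(2) b by (auto dest: nth_mem)
    ultimately show ?thesis
      using "3.prems"(1) 0 b by auto
  next
    case (Suc a')
    then show ?thesis
      using "3.IH"[of a' b'] "3.prems" b by auto
  qed
qed auto

lemma indep_list_length: "xs \<in> set_pmf (indep_list ps) \<Longrightarrow> length xs = length ps"
  by (induction ps arbitrary: xs) auto

lemma prob_indep_list_fresh_replacements_ge:
  assumes "length zs \<le> length ps" "finite A" "card A + k * length zs \<le> M" "0 \<le> c"
    and "\<And>j w. j < length zs \<Longrightarrow> R (zs ! j) w \<Longrightarrow> finite w \<and> card w \<le> k"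
    and "\<And>j B. j < length zs \<Longrightarrow> finite B \<Longrightarrow> card B \<le> M \<Longrightarrow>
        c \<le> measure_pmf.prob (ps ! j) {w. R (zs ! j) w \<and> (w - zs ! j) \<inter> B = {}}"
  shows "c ^ length zs \<le> measure_pmf.prob (indep_list ps) {ws. fresh_replacements R A zs ws}"
  using assms
proof (induction ps arbitrary: zs A)
  case (Cons p ps)
  show ?case
  proof (cases zs)
    case (Cons z zs')
    have "c * (c ^ length zs' * 1) \<le> measure_pmf.prob (indep_list (p # ps)) {ws. fresh_replacements R A zs ws}"
      unfolding indep_list.simps
    proof (rule measure_bind_pmf_ge[where A = "{w. R z w \<and> (w - z) \<inter> A = {}}"])
      show "c \<le> measure_pmf.prob p {w. R z w \<and> (w - z) \<inter> A = {}}"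
        using Cons.prems(6)[of 0 A] Cons.prems(2,3) \<open>zs = z # zs'\<close> by simp
    next
      fix w assume w: "w \<in> {w. R z w \<and> (w - z) \<inter> A = {}}"
      then have "finite w" "card w \<le> k"
        using Cons.prems(5)[of 0 w] \<open>zs = z # zs'\<close> by auto
      have "card (A \<union> w) + k * length zs' \<le> M"
        using card_Un_le[of A w] Cons.prems(3) \<open>card w \<le> k\<close> \<open>zs = z # zs'\<close> by simp
      have "c ^ length zs' \<le> measure_pmf.prob (indep_list ps) {ws. fresh_replacements R (A \<union> w) zs' ws}"
      proof (rule Cons.IH)
        fix j w' B
        assume "j < length zs'"
        then show "R (zs' ! j) w' \<Longrightarrow> finite w' \<and> card w' \<le> k"
          and "finite B \<Longrightarrow> card B \<le> M \<Longrightarrow>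
            c \<le> measure_pmf.prob (ps ! j) {w. R (zs' ! j) w \<and> (w - zs' ! j) \<inter> B = {}}"
          using Cons.prems(5,6)[of "Suc j"] \<open>zs = z # zs'\<close> by auto
      qed (use Cons.prems(1,2,4) \<open>finite w\<close> \<open>card (A \<union> w) + k * length zs' \<le> M\<close>
             \<open>zs = z # zs'\<close> in auto)
      then show "c ^ length zs' * 1 \<le> measure_pmf.prob (indep_list ps \<bind> (\<lambda>ws. return_pmf (w # ws)))
          {ws. fresh_replacements R A zs ws}"
        using w \<open>zs = z # zs'\<close> by (intro measure_bind_pmf_ge) auto
    qed (use \<open>0 \<le> c\<close> in simp)
    then show ?thesis using Cons by simp
  qed simp
qed simp

lemma vertex_cover_finite: "vertex_cover n E C \<Longrightarrow> finite C"
  unfolding vertex_cover_def using finite_subset by blast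

lemma measure_pmf_of_set_avoid_ge:
  assumes "finite R" "R \<noteq> {}" "finite B" "R - B \<subseteq> X"
  shows "1 - real (card B) / real (card R) \<le> measure_pmf.prob (pmf_of_set R) X"
proof -
  have "real (card R) - real (card B) \<le> real (card (R - B))"
    using diff_card_le_card_Diff[OF assms(3), of R] by linarith
  also have "\<dots> \<le> real (card (R \<inter> X))"
    using assms(1,4) by (intro of_nat_mono card_mono) auto
  finally have "(real (card R) - real (card B)) / real (card R) \<le> real (card (R \<inter> X)) / real (card R)"
    by (intro divide_right_mono) auto
  moreover have "(real (card R) - real (card B)) / real (card R) = 1 - real (card B) / real (card R)"
    using assms(1,2) by (simp add: diff_divide_distrib)
  ultimately show ?thesis
    using assms(1,2) by (simp add: measure_pmf_of_set)
qed

definition fill_invariant :: "nat \<Rightarrow> nat \<Rightarrow> nat set \<Rightarrow> nat set \<Rightarrow> nat \<Rightarrow> nat set \<Rightarrow> bool" where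
  "fill_invariant n k y B i w \<longleftrightarrow>
     y \<subseteq> w \<and> w \<subseteq> {..<n} \<and> card w = min k (card y + i) \<and> (w - y) \<inter> B = {}"

lemma prob_fill_step_ge:
  assumes inv: "fill_invariant n k y B i w" and "k < n" "finite B" "card B \<le> M"
  shows "1 - real M / real (n - k) \<le> measure_pmf.prob (fill_step n k w) {w. fill_invariant n k y B (Suc i) w}"
proof (cases "card w < k")
  case True
  define R where "R = {..<n} - w"
  have "w \<subseteq> {..<n}" "finite w"
    using inv finite_subset unfolding fill_invariant_def by auto
  then have "card R = n - card w"
    unfolding R_def by (simp add: card_Diff_subset)
  with True \<open>k < n\<close> have "R \<noteq> {}" "n - k \<le> card R"
    by auto
  have "R - B \<subseteq> (\<lambda>u. insert u w) -` {w. fill_invariant n k y B (Suc i) w}"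
    using inv True \<open>finite w\<close> unfolding R_def fill_invariant_def by auto
  then have "1 - real (card B) / real (card R)
      \<le> measure_pmf.prob (pmf_of_set R) ((\<lambda>u. insert u w) -` {w. fill_invariant n k y B (Suc i) w})"
    using \<open>R \<noteq> {}\<close> \<open>finite B\<close> by (intro measure_pmf_of_set_avoid_ge) (auto simp: R_def)
  moreover have "real (card B) / real (card R) \<le> real M / real (n - k)"
    using \<open>card B \<le> M\<close> \<open>n - k \<le> card R\<close> \<open>k < n\<close> by (intro frac_le) auto
  moreover have "fill_step n k w = map_pmf (\<lambda>u. insert u w) (pmf_of_set R)"
    using True \<open>R \<noteq> {}\<close> unfolding fill_step_def R_def by simp
  ultimately show ?thesis by simp
next
  case False
  then have "fill_invariant n k y B (Suc i) w"
    using inv unfolding fill_invariant_def by auto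
  then show ?thesis
    using False by (simp add: fill_step_def)
qed

lemma prob_fill_ge:
  assumes "y \<subseteq> {..<n}" "card y \<le> k" "k < n" "finite B" "card B \<le> M" "M \<le> n - k"
  shows "(1 - real M / real (n - k)) ^ k
    \<le> measure_pmf.prob (fill n k y) {w. y \<subseteq> w \<and> w \<subseteq> {..<n} \<and> card w = k \<and> (w - y) \<inter> B = {}}"
proof -
  have "(1 - real M / real (n - k)) ^ i
      \<le> measure_pmf.prob (((\<lambda>p. bind_pmf p (fill_step n k)) ^^ i) (return_pmf y)) {w. fill_invariant n k y B i w}"
    for i
  proof (induction i)
    case 0
    show ?case
      using assms(1,2) by (simp add: fill_invariant_def min_absorb2)
  next
    case (Suc i)
    have "0 \<le> 1 - real M / real (n - k)"
      using assms(3,6) by (simp add: field_simps)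
    then have "(1 - real M / real (n - k)) ^ i * (1 - real M / real (n - k))
        \<le> measure_pmf.prob (((\<lambda>p. bind_pmf p (fill_step n k)) ^^ i) (return_pmf y) \<bind> fill_step n k)
             {w. fill_invariant n k y B (Suc i) w}"
      using Suc prob_fill_step_ge assms(3-5) by (intro measure_bind_pmf_ge) auto
    then show ?case
      by (simp add: mult.commute)
  qed
  also have "measure_pmf.prob (((\<lambda>p. bind_pmf p (fill_step n k)) ^^ k) (return_pmf y)) {w. fill_invariant n k y B k w}
      \<le> measure_pmf.prob (fill n k y) {w. y \<subseteq> w \<and> w \<subseteq> {..<n} \<and> card w = k \<and> (w - y) \<inter> B = {}}"
    unfolding fill_def fill_invariant_def by (intro measure_pmf.finite_measure_mono) auto
  finally show ?thesis .
qed

definition repair :: "nat set set \<Rightarrow> nat set \<Rightarrow> nat set \<Rightarrow> nat set" where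
  "repair E x S = (x - S) \<union> {u. \<exists>v\<in>S. {u, v} \<in> E}"

lemma jump_repair_eq:
  "jump_repair n E k x = Pi_pmf x False (\<lambda>_. bernoulli_pmf (1/2)) \<bind> (\<lambda>f. fill n k (repair E x {v \<in> x. f v}))"
  unfolding jump_repair_def repair_def Let_def by simp

lemma repair_covers_edge:
  assumes "graph n E" "e \<in> E" "e \<inter> x \<noteq> {}"
  shows "e \<inter> repair E x S \<noteq> {}"
proof -
  obtain v where v: "v \<in> e" "v \<in> x"
    using assms(3) by blast
  obtain a b where "e = {a, b}"
    using assms(1,2) unfolding graph_def by blast
  with v(1) obtain u where "e = {u, v}"
    by (auto simp: insert_commute)
  show ?thesis
  proof (cases "v \<in> S")
    case True
    with \<open>e = {u, v}\<close> assms(2) have "u \<in> repair E x S"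
      unfolding repair_def by blast
    then show ?thesis
      using \<open>e = {u, v}\<close> by blast
  next
    case False
    then show ?thesis
      using v unfolding repair_def by blast
  qed
qed

lemma repair_subset_cover:
  assumes "vertex_cover n E z"
  shows "repair E x (x - z) \<subseteq> z"
proof
  fix u assume "u \<in> repair E x (x - z)"
  then consider "u \<in> x \<inter> z" | v where "v \<in> x - z" "{u, v} \<in> E"
    unfolding repair_def by blast
  then show "u \<in> z"
  proof cases
    case (2 v)
    then have "{u, v} \<inter> z \<noteq> {}"
      using assms unfolding vertex_cover_def by blast
    with \<open>v \<in> x - z\<close> show ?thesis
      by blast
  qed simp
qed

definition replaces :: "nat \<Rightarrow> nat set set \<Rightarrow> nat \<Rightarrow> nat set \<Rightarrow> nat set \<Rightarrow> bool" where
  "replaces n E k z w \<longleftrightarrow> feasible n E k w \<and> card z \<le> card w"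

lemma prob_jump_repair_replaces_ge:
  assumes "graph n E" "feasible n E k x" "feasible n E k z"
    and "k < n" "finite B" "card B \<le> M" "M \<le> n - k"
  shows "(1/2) ^ k * (1 - real M / real (n - k)) ^ k
    \<le> measure_pmf.prob (jump_repair n E k x) {w. replaces n E k z w \<and> (w - z) \<inter> B = {}}"
  unfolding jump_repair_eq
proof (rule measure_bind_pmf_ge[where A = "{\<lambda>v. v \<in> x - z}"])
  have "finite x"
    using assms(2) vertex_cover_finite unfolding feasible_def by blast
  then have "measure_pmf.prob (Pi_pmf x False (\<lambda>_. bernoulli_pmf (1/2))) {\<lambda>v. v \<in> x - z} = (1/2) ^ card x"
    by (subst measure_pmf_single, subst pmf_Pi') auto
  moreover have "(1/2::real) ^ k \<le> (1/2) ^ card x"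
    using assms(2) unfolding feasible_def by (intro power_decreasing) auto
  ultimately show "(1/2) ^ k \<le> measure_pmf.prob (Pi_pmf x False (\<lambda>_. bernoulli_pmf (1/2))) {\<lambda>v. v \<in> x - z}"
    by simp
  show "0 \<le> (1 - real M / real (n - k)) ^ k"
    using assms(4,7) by (simp add: field_simps)
next
  fix f assume "f \<in> {\<lambda>v. v \<in> x - z}"
  then have "{v \<in> x. f v} = x - z"
    by auto
  define y where "y = repair E x (x - z)"
  have "y \<subseteq> z"
    unfolding y_def using assms(3) repair_subset_cover unfolding feasible_def by blast
  have y_covers: "e \<inter> y \<noteq> {}" if "e \<in> E" for e
    unfolding y_def using repair_covers_edge[OF assms(1) that] assms(2) that
    unfolding feasible_def vertex_cover_def by blast
  have "z \<subseteq> {..<n}" "finite z" "card z \<le> k"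
    using assms(3) vertex_cover_finite unfolding feasible_def vertex_cover_def by auto
  with \<open>y \<subseteq> z\<close> have "y \<subseteq> {..<n}" "card y \<le> k"
    using card_mono[of z y] by auto
  have "{w. y \<subseteq> w \<and> w \<subseteq> {..<n} \<and> card w = k \<and> (w - y) \<inter> B = {}}
      \<subseteq> {w. replaces n E k z w \<and> (w - z) \<inter> B = {}}"
    using y_covers \<open>y \<subseteq> z\<close> \<open>card z \<le> k\<close>
    unfolding replaces_def feasible_def vertex_cover_def by blast
  from order.trans[OF prob_fill_ge[OF \<open>y \<subseteq> {..<n}\<close> \<open>card y \<le> k\<close> assms(4-7)]
      measure_pmf.finite_measure_mono[OF this]]
  show "(1 - real M / real (n - k)) ^ k
      \<le> measure_pmf.prob (fill n k (repair E x {v \<in> x. f v})) {w. replaces n E k z w \<and> (w - z) \<inter> B = {}}"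
    unfolding \<open>{v \<in> x. f v} = x - z\<close> y_def[symmetric] by simp
qed

lemma optimal_diversity_exists:
  assumes "feasible_pop n E k P"
  shows "\<exists>Q. length Q = length P \<and> optimal_diversity n E k Q"
proof -
  define S where "S = {Q. length Q = length P \<and> feasible_pop n E k Q}"
  have "S \<subseteq> {Q. set Q \<subseteq> Pow {..<n} \<and> length Q = length P}"
    unfolding S_def feasible_pop_def feasible_def vertex_cover_def by auto
  then have "finite S"
    using finite_lists_length_eq[of "Pow {..<n}" "length P"] finite_subset by auto
  moreover have "P \<in> S"
    using assms unfolding S_def by simp
  ultimately obtain Q where "Q \<in> S" "diversity Q = Max (diversity ` S)"
    using Max_in[of "diversity ` S"] by fastforce
  moreover from this(2) \<open>finite S\<close> have "\<forall>Q'\<in>S. diversity Q' \<le> diversity Q"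
    by simp
  ultimately show ?thesis
    unfolding S_def optimal_diversity_def by auto
qed

lemma optimal_diversity_if_diversity_ge:
  assumes "optimal_diversity n E k Q" "length R = length Q" "feasible_pop n E k R"
    and "diversity Q \<le> diversity R"
  shows "optimal_diversity n E k R"
  using assms unfolding optimal_diversity_def by force

lemma feasible_pop_Union:
  assumes "feasible_pop n E k Q"
  shows "finite (\<Union>(set Q))" "card (\<Union>(set Q)) \<le> k * length Q"
proof -
  show "finite (\<Union>(set Q))"
    using assms vertex_cover_finite unfolding feasible_pop_def feasible_def by blast
  have "card (\<Union>(set Q)) \<le> (\<Sum>x\<in>set Q. card x)"
    by (rule card_Union_le_sum_card)
  also have "\<dots> \<le> card (set Q) * k"
    using assms sum_bounded_above[of "set Q" card k] unfolding feasible_pop_def feasible_def by auto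
  also have "\<dots> \<le> k * length Q"
    using card_length[of Q] by simp
  finally show "card (\<Union>(set Q)) \<le> k * length Q" .
qed

lemma optimal_diversity_take_fresh_replacements:
  assumes opt: "optimal_diversity n E k zs"
    and fresh: "fresh_replacements (replaces n E k) (\<Union>(set zs)) zs ws"
  shows "optimal_diversity n E k (take (length zs) ws)" (is "optimal_diversity n E k ?W")
proof (rule optimal_diversity_if_diversity_ge[OF opt])
  have "length zs \<le> length ws"
    using fresh by (rule fresh_replacements_length)
  then show "length ?W = length zs"
    by simp
  have zs_finite: "finite (zs ! i)" if "i < length zs" for i
    using opt that vertex_cover_finite nth_mem
    unfolding optimal_diversity_def feasible_pop_def feasible_def by blast
  have replaces: "replaces n E k (zs ! i) (ws ! i)" if "i < length zs" for i
    using fresh_replacements_nth(1)[OF fresh that] .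
  then show "feasible_pop n E k ?W"
    unfolding feasible_pop_def replaces_def by (auto simp: in_set_conv_nth)
  show "diversity zs \<le> diversity ?W"
  proof (rule diversity_mono)
    fix a b assume "a < b" "b < length zs"
    with replaces[of a] replaces[of b] zs_finite[of a] zs_finite[of b]
      fresh_replacements_Int_subset[OF fresh _ \<open>a < b\<close> \<open>b < length zs\<close>]
    show "hamming (zs ! a) (zs ! b) \<le> hamming (?W ! a) (?W ! b)"
      by (auto intro!: hamming_mono simp: replaces_def feasible_def dest: vertex_cover_finite)
  qed (use \<open>length ?W = length zs\<close> in simp)
qed

lemma prob_offspring_optimal_ge:
  assumes "feasible_pop n E k P" "length P = m" "m \<le> length ps" "0 \<le> c"
    and trial: "\<And>p z B. p \<in> set ps \<Longrightarrow> feasible n E k z \<Longrightarrow> finite B \<Longrightarrow> card B \<le> 2 * k * m \<Longrightarrow>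
        c \<le> measure_pmf.prob p {w. replaces n E k z w \<and> (w - z) \<inter> B = {}}"
  shows "c ^ m \<le> measure_pmf.prob (indep_list ps) {ws. optimal_diversity n E k (take m ws)}"
proof -
  obtain Qs where "length Qs = m" and opt: "optimal_diversity n E k Qs"
    using optimal_diversity_exists[OF assms(1)] assms(2) by auto
  then have feasible: "feasible_pop n E k Qs"
    unfolding optimal_diversity_def by simp
  have "c ^ length Qs \<le> measure_pmf.prob (indep_list ps) {ws. fresh_replacements (replaces n E k) (\<Union>(set Qs)) Qs ws}"
  proof (rule prob_indep_list_fresh_replacements_ge)
    show "finite (\<Union>(set Qs))" "card (\<Union>(set Qs)) + k * length Qs \<le> 2 * k * m"
      using feasible_pop_Union[OF feasible] \<open>length Qs = m\<close> by auto
    fix j assume "j < length Qs"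
    then have "feasible n E k (Qs ! j)" "ps ! j \<in> set ps"
      using feasible \<open>length Qs = m\<close> \<open>m \<le> length ps\<close> unfolding feasible_pop_def by auto
    then show "\<And>w. replaces n E k (Qs ! j) w \<Longrightarrow> finite w \<and> card w \<le> k"
      and "\<And>B. finite B \<Longrightarrow> card B \<le> 2 * k * m \<Longrightarrow>
        c \<le> measure_pmf.prob (ps ! j) {w. replaces n E k (Qs ! j) w \<and> (w - Qs ! j) \<inter> B = {}}"
      using trial vertex_cover_finite unfolding replaces_def feasible_def by blast+
  qed (use \<open>length Qs = m\<close> assms(3,4) in auto)
  also have "\<dots> \<le> measure_pmf.prob (indep_list ps) {ws. optimal_diversity n E k (take m ws)}"
    using optimal_diversity_take_fresh_replacements[OF opt] \<open>length Qs = m\<close>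
    by (intro measure_pmf.finite_measure_mono) auto
  finally show ?thesis
    using \<open>length Qs = m\<close> by simp
qed

lemma set_pmf_step_one:
  assumes "Q \<in> set_pmf (step_one n E k P)"
  shows "Q = P \<or> feasible_pop n E k Q \<and> length Q = length P \<and> diversity P \<le> diversity Q"
  using assms indep_list_length unfolding step_one_def by fastforce

lemma set_pmf_select:
  assumes "Q0 \<in> select_candidates n E k m Pool" "Q \<in> set_pmf (select n E k m Pool)"
  shows "Q \<in> select_candidates n E k m Pool" "diversity Q0 \<le> diversity Q"
proof -
  let ?C = "select_candidates n E k m Pool"
  have "?C \<subseteq> {Q. set Q \<subseteq> set Pool \<and> length Q = m}"
    unfolding select_candidates_def by (auto dest!: set_mset_mono)
  then have "finite ?C"
    using finite_lists_length_eq[of "set Pool" m] finite_subset by auto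
  define Best where "Best = {Q \<in> ?C. \<forall>Q'\<in>?C. diversity Q' \<le> diversity Q}"
  obtain Q1 where "Q1 \<in> ?C" "diversity Q1 = Max (diversity ` ?C)"
    using Max_in[of "diversity ` ?C"] \<open>finite ?C\<close> assms(1) by fastforce
  with \<open>finite ?C\<close> have "Q1 \<in> Best"
    unfolding Best_def by simp
  moreover have "finite Best"
    using \<open>finite ?C\<close> unfolding Best_def by simp
  ultimately have "set_pmf (select n E k m Pool) = Best"
    unfolding select_def Best_def[symmetric] by (intro set_pmf_of_set) auto
  with assms show "Q \<in> ?C" "diversity Q0 \<le> diversity Q"
    unfolding Best_def by auto
qed

lemma set_pmf_step_plus:
  assumes "feasible_pop n E k P" "Q \<in> set_pmf (step_plus n E k lam P)"
  shows "feasible_pop n E k Q \<and> length Q = length P \<and> diversity P \<le> diversity Q"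
proof -
  obtain Off where Q: "Q \<in> set_pmf (select n E k (length P) (P @ Off))"
    using assms(2) unfolding step_plus_def by auto
  have "P \<in> select_candidates n E k (length P) (P @ Off)"
    unfolding select_candidates_def using assms(1) by simp
  from set_pmf_select[OF this Q] show ?thesis
    unfolding select_candidates_def by auto
qed

abbreviation offspring_bound :: "nat \<Rightarrow> nat \<Rightarrow> nat \<Rightarrow> real" where
  "offspring_bound n K m \<equiv> (1/2) ^ K * (1 - real (2 * K * m) / real (n - K)) ^ K"

lemma offspring_bound_nonneg:
  assumes "K < n" "2 * K * m \<le> n - K"
  shows "0 \<le> offspring_bound n K m"
proof -
  have "real (2 * K * m) \<le> real (n - K)"
    using assms(2) by (simp only: of_nat_le_iff)
  then have "real (2 * K * m) / real (n - K) \<le> 1"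
    using assms(1) by (simp add: divide_le_eq_1 del: of_nat_mult of_nat_diff)
  then show ?thesis
    by simp
qed

lemma prob_step_one_optimal_ge:
  assumes "graph n E" "K < n" "2 * K * m \<le> n - K" "length P = m" "feasible_pop n E K P"
  shows "offspring_bound n K m ^ m \<le> measure_pmf.prob (step_one n E K P) {Q. optimal_diversity n E K Q}"
proof -
  have "0 \<le> offspring_bound n K m"
    using assms(2,3) by (rule offspring_bound_nonneg)
  have mutation: "offspring_bound n K m
      \<le> measure_pmf.prob (jump_repair n E K x) {w. replaces n E K z w \<and> (w - z) \<inter> B = {}}"
    if "x \<in> set P" "feasible n E K z" "finite B" "card B \<le> 2 * K * m" for x z B
    using assms(5) that by (intro prob_jump_repair_replaces_ge[OF assms(1) _ _ assms(2) _ _ assms(3)])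
      (auto simp: feasible_pop_def)
  have "offspring_bound n K m ^ m * 1 \<le> measure_pmf.prob (step_one n E K P) {Q. optimal_diversity n E K Q}"
    unfolding step_one_def
  proof (rule measure_bind_pmf_ge)
    show "offspring_bound n K m ^ m \<le> measure_pmf.prob (indep_list (map (jump_repair n E K) P))
        {ws. optimal_diversity n E K (take m ws)}"
      using mutation \<open>0 \<le> offspring_bound n K m\<close>
      by (intro prob_offspring_optimal_ge[OF assms(5,4)]) (auto simp: assms(4))
  next
    fix ws assume ws: "ws \<in> set_pmf (indep_list (map (jump_repair n E K) P))"
      "ws \<in> {ws. optimal_diversity n E K (take m ws)}"
    then have "optimal_diversity n E K ws"
      using indep_list_length assms(4) by fastforce
    moreover have "diversity P \<le> diversity ws"
      using calculation assms(4,5) indep_list_length[OF ws(1)] unfolding optimal_diversity_def by simp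
    ultimately show "1 \<le> measure_pmf.prob (return_pmf (if feasible_pop n E K ws \<and> diversity ws \<ge> diversity P
        then ws else P)) {Q. optimal_diversity n E K Q}"
      unfolding optimal_diversity_def by simp
  qed simp
  then show ?thesis
    by simp
qed

lemma prob_step_plus_optimal_ge:
  assumes "graph n E" "K < n" "2 * K * m \<le> n - K" "length P = m" "feasible_pop n E K P"
    and "0 < m" "m \<le> lam"
  shows "offspring_bound n K m ^ m \<le> measure_pmf.prob (step_plus n E K lam P) {Q. optimal_diversity n E K Q}"
proof -
  have "0 \<le> offspring_bound n K m"
    using assms(2,3) by (rule offspring_bound_nonneg)
  have mutation: "offspring_bound n K m
      \<le> measure_pmf.prob (jump_repair n E K x) {w. replaces n E K z w \<and> (w - z) \<inter> B = {}}"
    if "x \<in> set P" "feasible n E K z" "finite B" "card B \<le> 2 * K * m" for x z B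
    using assms(5) that by (intro prob_jump_repair_replaces_ge[OF assms(1) _ _ assms(2) _ _ assms(3)])
      (auto simp: feasible_pop_def)
  define parent_mutation where
    "parent_mutation = pmf_of_set {..<length P} \<bind> (\<lambda>i. jump_repair n E K (P ! i))"
  have trial: "offspring_bound n K m \<le> measure_pmf.prob parent_mutation {w. replaces n E K z w \<and> (w - z) \<inter> B = {}}"
    if "feasible n E K z" "finite B" "card B \<le> 2 * K * m" for z B
  proof -
    have "{..<length P} \<noteq> {}"
      using assms(4,6) by auto
    then have "1 * offspring_bound n K m \<le> measure_pmf.prob parent_mutation {w. replaces n E K z w \<and> (w - z) \<inter> B = {}}"
      unfolding parent_mutation_def
      using mutation[OF nth_mem that] \<open>0 \<le> offspring_bound n K m\<close>
      by (intro measure_bind_pmf_ge[where A = UNIV]) auto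
    then show ?thesis
      by simp
  qed
  have "offspring_bound n K m ^ m * 1 \<le> measure_pmf.prob (step_plus n E K lam P) {Q. optimal_diversity n E K Q}"
    unfolding step_plus_def parent_mutation_def[symmetric]
  proof (rule measure_bind_pmf_ge)
    show "offspring_bound n K m ^ m \<le> measure_pmf.prob (indep_list (replicate lam parent_mutation))
        {ws. optimal_diversity n E K (take m ws)}"
      using assms(7) trial \<open>0 \<le> offspring_bound n K m\<close>
      by (intro prob_offspring_optimal_ge[OF assms(5,4)]) auto
  next
    fix ws assume "ws \<in> set_pmf (indep_list (replicate lam parent_mutation))"
      and opt_ws: "ws \<in> {ws. optimal_diversity n E K (take m ws)}"
    then have "length ws = lam"
      by (simp add: indep_list_length)
    then have "length (take m ws) = length P"
      using assms(4,7) by simp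
    moreover have "mset (take m ws) \<subseteq># mset (P @ ws)"
      by (metis append_take_drop_id mset_append mset_subset_eq_add_left mset_subset_eq_add_right
          subset_mset.order_trans)
    ultimately have candidate: "take m ws \<in> select_candidates n E K (length P) (P @ ws)"
      using opt_ws unfolding select_candidates_def optimal_diversity_def by auto
    have "optimal_diversity n E K Q" if "Q \<in> set_pmf (select n E K (length P) (P @ ws))" for Q
    proof (rule optimal_diversity_if_diversity_ge[of n E K "take m ws"])
      show "length Q = length (take m ws)" "feasible_pop n E K Q" "diversity (take m ws) \<le> diversity Q"
        using set_pmf_select[OF candidate that] \<open>length (take m ws) = length P\<close>
        unfolding select_candidates_def by auto
    qed (use opt_ws in simp)
    then have "measure_pmf.prob (select n E K (length P) (P @ ws)) {Q. optimal_diversity n E K Q} = 1"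
      by (subst measure_pmf.prob_eq_1) (auto intro!: AE_pmfI)
    then show "1 \<le> measure_pmf.prob (select n E K (length P) (P @ ws)) {Q. optimal_diversity n E K Q}"
      by simp
  qed simp
  then show ?thesis
    by simp
qed

lemma offspring_bound_power_ge:
  fixes K m n :: nat
  assumes "0 < K" "0 < m" "4 * (K * m)\<^sup>2 < n"
  shows "K < n" "2 * K * m \<le> n - K"
    and "(1/2) ^ (K * m) * (1 - 4 * real ((K * m)\<^sup>2) / real n) \<le> offspring_bound n K m ^ m"
proof -
  define a where "a = K * m"
  have "1 \<le> a" "K \<le> a" "a \<le> a\<^sup>2"
    using assms(1,2) by (auto simp: a_def power2_eq_square)
  moreover have "4 * a\<^sup>2 < n"
    using assms(3) by (simp add: a_def)
  ultimately show "K < n" "2 * K * m \<le> n - K"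
    unfolding a_def[symmetric] mult.assoc by linarith+
  then have "real (2 * a) \<le> real (n - K)" "K < n"
    by (simp_all only: a_def mult.assoc of_nat_le_iff)
  then have ratio_le_1: "real (2 * a) / real (n - K) \<le> 1"
    by (simp add: divide_le_eq_1 del: of_nat_mult of_nat_diff)
  have "2 * K \<le> n"
    using \<open>4 * a\<^sup>2 < n\<close> \<open>K \<le> a\<close> \<open>a \<le> a\<^sup>2\<close> by linarith
  then have "(real a)\<^sup>2 * (2 * real K) \<le> (real a)\<^sup>2 * real n"
    by (intro mult_left_mono) auto
  then have "real a * real (2 * a) * real n \<le> 4 * real (a\<^sup>2) * real (n - K)"
    using \<open>K < n\<close> by (simp add: of_nat_diff power2_eq_square algebra_simps)
  then have "real a * (real (2 * a) / real (n - K)) \<le> 4 * real (a\<^sup>2) / real n"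
    using \<open>K < n\<close> by (simp add: divide_simps)
  then have "1 - 4 * real (a\<^sup>2) / real n \<le> 1 + real a * (- (real (2 * a) / real (n - K)))"
    by simp
  also have "\<dots> \<le> (1 - real (2 * a) / real (n - K)) ^ a"
    using Bernoulli_inequality[of "- (real (2 * a) / real (n - K))" a] ratio_le_1 by simp
  finally have "(1/2) ^ a * (1 - 4 * real (a\<^sup>2) / real n) \<le> (1/2) ^ a * (1 - real (2 * a) / real (n - K)) ^ a"
    by (intro mult_left_mono) auto
  also have "\<dots> = offspring_bound n K m ^ m"
    by (simp add: a_def power_mult_distrib power_mult mult.assoc)
  finally show "(1/2) ^ (K * m) * (1 - 4 * real ((K * m)\<^sup>2) / real n) \<le> offspring_bound n K m ^ m"
    by (simp add: a_def)
qed

text \<open>The value 1 at n = 0 makes the resulting probability bound trivial there.\<close>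
definition failure_bound :: "nat \<Rightarrow> nat \<Rightarrow> real" where
  "failure_bound a n = (if n = 0 then 1 else 4 * real (a\<^sup>2) / real n)"

lemma failure_bound_tendsto_zero:
  assumes "(\<lambda>n. real (a n)) \<in> o(\<lambda>n. sqrt (real n))"
  shows "(\<lambda>n. failure_bound (a n) n) \<longlonglongrightarrow> 0"
proof -
  have "(\<lambda>n. real (a n) / sqrt (real n)) \<longlonglongrightarrow> 0"
    using smalloD_tendsto[OF assms] by simp
  then have "(\<lambda>n. 4 * (real (a n) / sqrt (real n))\<^sup>2) \<longlonglongrightarrow> 4 * 0\<^sup>2"
    by (intro tendsto_intros)
  moreover have "\<forall>\<^sub>F n in sequentially. 4 * (real (a n) / sqrt (real n))\<^sup>2 = failure_bound (a n) n"
    using eventually_gt_at_top[of 0]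
    by eventually_elim (simp add: failure_bound_def power_divide)
  ultimately show ?thesis
    by (simp add: tendsto_cong)
qed

lemma prob_steps_optimal_ge:
  assumes "graph n E" "0 < K" "0 < m" "m \<le> lam" "length P = m" "feasible_pop n E K P"
  shows "(1/2) ^ (K * m) * (1 - failure_bound (K * m) n)
      \<le> measure_pmf.prob (step_one n E K P) {Q. optimal_diversity n E K Q}
    \<and> (1/2) ^ (K * m) * (1 - failure_bound (K * m) n)
      \<le> measure_pmf.prob (step_plus n E K lam P) {Q. optimal_diversity n E K Q}"
    (is "?p \<le> _ \<and> ?p \<le> _")
proof (cases "failure_bound (K * m) n < 1")
  case True
  then have "0 < n"
    by (cases "n = 0") (auto simp: failure_bound_def)
  with True have "real (4 * (K * m)\<^sup>2) < real n"
    by (simp add: failure_bound_def pos_divide_less_eq)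
  then have "4 * (K * m)\<^sup>2 < n"
    by (simp only: of_nat_less_iff)
  note arith = offspring_bound_power_ge[OF assms(2,3) this]
  show ?thesis
    using prob_step_one_optimal_ge[OF assms(1) arith(1,2) assms(5,6)]
      prob_step_plus_optimal_ge[OF assms(1) arith(1,2) assms(5,6,3,4)] arith(3) \<open>0 < n\<close>
    by (simp add: failure_bound_def)
next
  case False
  then have "?p \<le> 0"
    by (intro mult_nonneg_nonpos) auto
  then show ?thesis
    by (meson measure_nonneg order_trans)
qed

lemma prob_run_step_one_not_optimal_le:
  assumes "\<And>Q. length Q = length P \<Longrightarrow> feasible_pop n E k Q \<Longrightarrow>
      p \<le> measure_pmf.prob (step_one n E k Q) {Q. optimal_diversity n E k Q}"
    and "feasible_pop n E k P"
  shows "measure_pmf.prob (run (step_one n E k) t P) {Q. \<not> optimal_diversity n E k Q} \<le> (1 - p) ^ t"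
proof (rule prob_run_not_absorbed_le[where I = "\<lambda>Q. length Q = length P \<and> feasible_pop n E k Q"])
  fix Q Q' assume "length Q = length P \<and> feasible_pop n E k Q" "Q' \<in> set_pmf (step_one n E k Q)"
  then show "length Q' = length P \<and> feasible_pop n E k Q'"
    using set_pmf_step_one[of Q' n E k Q] by auto
next
  fix Q Q' assume opt: "optimal_diversity n E k Q" and "Q' \<in> set_pmf (step_one n E k Q)"
  then show "optimal_diversity n E k Q'"
    using set_pmf_step_one[of Q' n E k Q] optimal_diversity_if_diversity_ge[OF opt, of Q'] by auto
qed (use assms in auto)

lemma prob_run_step_plus_not_optimal_le:
  assumes "\<And>Q. length Q = length P \<Longrightarrow> feasible_pop n E k Q \<Longrightarrow>
      p \<le> measure_pmf.prob (step_plus n E k lam Q) {Q. optimal_diversity n E k Q}"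
    and "feasible_pop n E k P"
  shows "measure_pmf.prob (run (step_plus n E k lam) t P) {Q. \<not> optimal_diversity n E k Q} \<le> (1 - p) ^ t"
proof (rule prob_run_not_absorbed_le[where I = "\<lambda>Q. length Q = length P \<and> feasible_pop n E k Q"])
  fix Q Q' assume "length Q = length P \<and> feasible_pop n E k Q" "Q' \<in> set_pmf (step_plus n E k lam Q)"
  then show "length Q' = length P \<and> feasible_pop n E k Q'"
    using set_pmf_step_plus[of n E k Q Q' lam] by auto
next
  fix Q Q' assume "length Q = length P \<and> feasible_pop n E k Q" and opt: "optimal_diversity n E k Q"
    and "Q' \<in> set_pmf (step_plus n E k lam Q)"
  then show "optimal_diversity n E k Q'"
    using set_pmf_step_plus[of n E k Q Q' lam] optimal_diversity_if_diversity_ge[OF opt, of Q'] by auto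
qed (use assms in auto)

lemma optimal_population_bounds:
  assumes "graph n E" "0 < K" "0 < m" "m \<le> lam" "length P = m" "feasible_pop n E K P"
  shows "let p = (1/2) ^ (K * m) * (1 - failure_bound (K * m) n) in
        measure_pmf.prob (step_one n E K P) {Q. optimal_diversity n E K Q} \<ge> p
      \<and> measure_pmf.prob (step_plus n E K lam P) {Q. optimal_diversity n E K Q} \<ge> p
      \<and> (\<forall>t. measure_pmf.prob (run (step_one n E K) t P)
               {Q. \<not> optimal_diversity n E K Q} \<le> (1 - p) ^ t)
      \<and> (\<forall>t. measure_pmf.prob (run (step_plus n E K lam) t P)
               {Q. \<not> optimal_diversity n E K Q} \<le> (1 - p) ^ t)"
proof -
  have progress:
    "(1/2) ^ (K * m) * (1 - failure_bound (K * m) n) \<le> measure_pmf.prob (step_one n E K Q) {Q. optimal_diversity n E K Q}"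
    "(1/2) ^ (K * m) * (1 - failure_bound (K * m) n) \<le> measure_pmf.prob (step_plus n E K lam Q) {Q. optimal_diversity n E K Q}"
    if "length Q = length P" "feasible_pop n E K Q" for Q
    using prob_steps_optimal_ge[OF assms(1-4) _ that(2)] that(1) assms(5) by simp_all
  show ?thesis
    unfolding Let_def
    using progress[OF refl assms(6)] prob_run_step_one_not_optimal_le[OF progress(1) assms(6)]
      prob_run_step_plus_not_optimal_le[OF progress(2) assms(6)]
    by blast
qed

theorem theorem1:
  fixes k \<mu> lam :: "nat \<Rightarrow> nat"
  assumes k_pos: "\<And>n. k n > 0"
    and \<mu>_pos: "\<And>n. \<mu> n > 0"
    and lam_ge: "\<And>n. lam n \<ge> \<mu> n"
    and small: "(\<lambda>n. real (k n * \<mu> n)) \<in> o(\<lambda>n. sqrt (real n))"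
  shows "\<exists>\<epsilon> :: nat \<Rightarrow> real. \<epsilon> \<longlonglongrightarrow> 0 \<and>
    (\<forall>n E P. graph n E \<and> (\<exists>C. vertex_cover n E C \<and> card C \<le> k n)
       \<and> length P = \<mu> n \<and> feasible_pop n E (k n) P \<longrightarrow>
      (let p = (1/2) ^ (k n * \<mu> n) * (1 - \<epsilon> n) in
        measure_pmf.prob (step_one n E (k n) P) {Q. optimal_diversity n E (k n) Q} \<ge> p
      \<and> measure_pmf.prob (step_plus n E (k n) (lam n) P) {Q. optimal_diversity n E (k n) Q} \<ge> p
      \<and> (\<forall>t. measure_pmf.prob (run (step_one n E (k n)) t P)
               {Q. \<not> optimal_diversity n E (k n) Q} \<le> (1 - p) ^ t)
      \<and> (\<forall>t. measure_pmf.prob (run (step_plus n E (k n) (lam n)) t P)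
               {Q. \<not> optimal_diversity n E (k n) Q} \<le> (1 - p) ^ t)))"
proof (intro exI[of _ "\<lambda>n. failure_bound (k n * \<mu> n) n"] conjI allI impI)
  show "(\<lambda>n. failure_bound (k n * \<mu> n) n) \<longlonglongrightarrow> 0"
    using small by (rule failure_bound_tendsto_zero)
qed (use optimal_population_bounds[OF _ k_pos \<mu>_pos lam_ge] in blast)

end
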